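(* In the two-period model with a transparent bailout and $p_0<p_g<1-S$, in any short-lived stimulation equilibrium we have $\bar\theta_m\ge p_0$.
   Context: Two-period model: a continuum of firms with privately known type $\theta\in[0,1]$, cdf $F$, density $f>0$, $f$ strictly log-concave, and for every $b\in(0,1]$ the map $a\mapsto 2\mathbb{E}[\theta\mid a<\theta<b]-\mathbb{E}[\theta\mid\theta\le a]$ is increasing on $(0,b)$. A type-$\theta$ firm holds one unit of an asset worth $\theta$ in each of two periods $t=1,2$. In each period it has a project with cost $I>0$ and net return $S>0$ that can be funded only by selling that period's unit; selling at price $p\ge I$ yields $p+S$ for that period, not selling yields $\theta$. Firms' total payoff is the sum over periods (equilibria in the limit of period-2 weight $\delta\to1$). In each period competitive short-lived risk-neutral buyers make Bertrand price offers, breaking even in expectation (indifferent buyers buy). At $t=1$ only, the government offers to buy one unit at price $p_g$; firms sell their $t=1$ unit to the government, to the market, or not at all. $t=1$ market sales are unobserved at $t=2$; acceptance of the government offer is observed at $t=2$ (transparent bailout). Equilibrium means perfect Bayesian equilibrium. Laissez-faire: $\theta_0\in(0,1)$ uniquely solves $\theta_0-S=\mathbb{E}[\theta\mid\theta\le\theta_0]$, $p_0:=\mathbb{E}[\theta\mid\theta\le\theta_0]\ge I$. Every equilibrium has cutoffs $0<\hat\theta\le\hat\theta_g\le\theta_2$: types $\le\hat\theta$ sell in both periods, types in $(\hat\theta,\hat\theta_g]$ sell only at $t=1$ to the government, types in $(\hat\theta_g,\theta_2]$ sell only at $t=2$, higher types never sell. A short-lived stimulation equilibrium has $\hat\theta_g=\theta_2$.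 Among types $\theta\le\hat\theta$, $\mu_g$ and $1-\mu_g$ are the fractions selling at $t=1$ to the government and to the market, and $\bar\theta_g$, $\bar\theta_m$ are the average asset values of those two groups. *)

theory Defs
  imports "HOL-Analysis.Analysis"
begin

definition fd :: "(real \<Rightarrow> real) \<Rightarrow> real \<Rightarrow> real" where
  "fd f \<theta> = indicator {0..1} \<theta> * f \<theta>"

text \<open>Mass of a (possibly fractional) group of types, given by weights w(theta) in [0,1].\<close>
definition mass :: "(real \<Rightarrow> real) \<Rightarrow> (real \<Rightarrow> real) \<Rightarrow> real" where
  "mass f w = (\<integral>\<theta>. w \<theta> * fd f \<theta> \<partial>lborel)"

definition avg :: "(real \<Rightarrow> real) \<Rightarrow> (real \<Rightarrow> real) \<Rightarrow> real" where
  "avg f w = (\<integral>\<theta>. \<theta> * w \<theta> * fd f \<theta> \<partial>lborel) / mass f w"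

definition condexp :: "(real \<Rightarrow> real) \<Rightarrow> real set \<Rightarrow> real" where
  "condexp f A = avg f (indicator A)"

definition strictly_log_concave_on :: "real set \<Rightarrow> (real \<Rightarrow> real) \<Rightarrow> bool" where
  "strictly_log_concave_on A f \<longleftrightarrow>
     (\<forall>x\<in>A. \<forall>y\<in>A. \<forall>u. x \<noteq> y \<and> 0 < u \<and> u < 1 \<longrightarrow>
        ln (f (u * x + (1 - u) * y)) > u * ln (f x) + (1 - u) * ln (f y))"

text \<open>Period-1 actions: sell to the government, sell to the market, hold.\<close>
datatype act1 = Gov | Mkt | Hold

text \<open>Value of selling one unit at price p: the project (cost I, net return S) is funded iff p \<ge> I.\<close>
definition sell_val :: "real \<Rightarrow> real \<Rightarrow> real \<Rightarrow> real" where
  "sell_val I S p = (if I \<le> p then p + S else p)"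

text \<open>Total payoff (period-2 weight delta = 1) of type theta following the plan (a, s):
  period-1 action a, and sell at t=2 iff s. pg: government price, p1: t=1 market price,
  qg / qn: t=2 market prices for firms that did / did not accept the bailout (observed).\<close>
definition payoff :: "real \<Rightarrow> real \<Rightarrow> real \<Rightarrow> real \<Rightarrow> real \<Rightarrow> real \<Rightarrow> real \<Rightarrow> act1 \<Rightarrow> bool \<Rightarrow> real" where
  "payoff I S pg p1 qg qn \<theta> a s =
     (case a of Gov \<Rightarrow> sell_val I S pg | Mkt \<Rightarrow> sell_val I S p1 | Hold \<Rightarrow> \<theta>) +
     (if s then sell_val I S (if a = Gov then qg else qn) else \<theta>)"

text \<open>Mixed strategy of the firm: sigma theta a s = probability that type theta follows plan (a,s).\<close>
definition valid_strategy :: "(real \<Rightarrow> act1 \<Rightarrow> bool \<Rightarrow> real) \<Rightarrow> bool" where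
  "valid_strategy \<sigma> \<longleftrightarrow>
     (\<forall>\<theta> a s. 0 \<le> \<sigma> \<theta> a s) \<and>
     (\<forall>\<theta>. \<sigma> \<theta> Gov True + \<sigma> \<theta> Gov False + \<sigma> \<theta> Mkt True + \<sigma> \<theta> Mkt False
          + \<sigma> \<theta> Hold True + \<sigma> \<theta> Hold False = 1) \<and>
     (\<forall>a s. (\<lambda>\<theta>. \<sigma> \<theta> a s) \<in> borel_measurable borel)"

definition w_mkt1 :: "(real \<Rightarrow> act1 \<Rightarrow> bool \<Rightarrow> real) \<Rightarrow> real \<Rightarrow> real" where
  "w_mkt1 \<sigma> \<theta> = \<sigma> \<theta> Mkt True + \<sigma> \<theta> Mkt False"
definition w_lab_g :: "(real \<Rightarrow> act1 \<Rightarrow> bool \<Rightarrow> real) \<Rightarrow> real \<Rightarrow> real" where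
  "w_lab_g \<sigma> \<theta> = \<sigma> \<theta> Gov True + \<sigma> \<theta> Gov False"
definition w_lab_n :: "(real \<Rightarrow> act1 \<Rightarrow> bool \<Rightarrow> real) \<Rightarrow> real \<Rightarrow> real" where
  "w_lab_n \<sigma> \<theta> = \<sigma> \<theta> Mkt True + \<sigma> \<theta> Mkt False + \<sigma> \<theta> Hold True + \<sigma> \<theta> Hold False"
definition w_sell2_g :: "(real \<Rightarrow> act1 \<Rightarrow> bool \<Rightarrow> real) \<Rightarrow> real \<Rightarrow> real" where
  "w_sell2_g \<sigma> \<theta> = \<sigma> \<theta> Gov True"
definition w_sell2_n :: "(real \<Rightarrow> act1 \<Rightarrow> bool \<Rightarrow> real) \<Rightarrow> real \<Rightarrow> real" where
  "w_sell2_n \<sigma> \<theta> = \<sigma> \<theta> Mkt True + \<sigma> \<theta> Hold True"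

definition firm_optimal where
  "firm_optimal I S pg p1 qg qn \<sigma> \<longleftrightarrow>
     (\<forall>\<theta>\<in>{0..1}. \<forall>a s. 0 < \<sigma> \<theta> a s \<longrightarrow>
        (\<forall>a' s'. payoff I S pg p1 qg qn \<theta> a' s' \<le> payoff I S pg p1 qg qn \<theta> a s))"

definition break_even where
  "break_even f p w \<longleftrightarrow> (mass f w > 0 \<longrightarrow> p = avg f w)"

text \<open>Bertrand competition at t=2 in the market of label weight lw and price q: no buyer can
  profitably outbid, where at price p' the firm of type theta sells iff sell_val p' \<ge> theta.\<close>
definition no_overbid2 where
  "no_overbid2 f I S q lw \<longleftrightarrow>
     (\<forall>p'>q. (\<integral>\<theta>. lw \<theta> * indicator {\<theta>. \<theta> \<le> sell_val I S p'} \<theta> * (\<theta> - p') * fd f \<theta> \<partial>lborel) \<le> 0)"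

text \<open>Bertrand competition at t=1: an outbidding buyer at p' buys from the types for which
  selling to the market at p' (with optimal continuation, t=2 prices unchanged since t=1 market
  sales are unobserved) is optimal.\<close>
definition accepts1 where
  "accepts1 I S pg p' qg qn \<theta> \<longleftrightarrow>
     max (payoff I S pg p' qg qn \<theta> Mkt True) (payoff I S pg p' qg qn \<theta> Mkt False) \<ge>
     Max {payoff I S pg p' qg qn \<theta> Gov True, payoff I S pg p' qg qn \<theta> Gov False,
          payoff I S pg p' qg qn \<theta> Hold True, payoff I S pg p' qg qn \<theta> Hold False}"

definition no_overbid1 where
  "no_overbid1 f I S pg p1 qg qn \<longleftrightarrow>
     (\<forall>p'>p1. (\<integral>\<theta>. indicator {\<theta>. accepts1 I S pg p' qg qn \<theta>} \<theta> * (\<theta> - p') * fd f \<theta> \<partial>lborel) \<le> 0)"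

definition equilibrium ::
  "(real \<Rightarrow> real) \<Rightarrow> real \<Rightarrow> real \<Rightarrow> real \<Rightarrow> (real \<Rightarrow> act1 \<Rightarrow> bool \<Rightarrow> real) \<Rightarrow> real \<Rightarrow> real \<Rightarrow> real \<Rightarrow> bool" where
  "equilibrium f I S pg \<sigma> p1 qg qn \<longleftrightarrow>
     valid_strategy \<sigma> \<and>
     firm_optimal I S pg p1 qg qn \<sigma> \<and>
     break_even f p1 (w_mkt1 \<sigma>) \<and>
     break_even f qg (w_sell2_g \<sigma>) \<and>
     break_even f qn (w_sell2_n \<sigma>) \<and>
     no_overbid1 f I S pg p1 qg qn \<and>
     no_overbid2 f I S qg (w_lab_g \<sigma>) \<and>
     no_overbid2 f I S qn (w_lab_n \<sigma>)"

text \<open>Short-lived stimulation: no (positive mass of) types sells only at t=2, i.e. hat theta_g = theta_2.\<close>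
definition short_lived_stimulation where
  "short_lived_stimulation f I S pg \<sigma> p1 qg qn \<longleftrightarrow>
     equilibrium f I S pg \<sigma> p1 qg qn \<and> mass f (\<lambda>\<theta>. \<sigma> \<theta> Hold True) = 0"

definition theta_m_bar where
  "theta_m_bar f \<sigma> = avg f (w_mkt1 \<sigma>)"

end

theory Submission
  imports Defs
begin

text \<open>
  Suppose the t=1 market price \<open>p1\<close>, which by break-even is the average type of the t=1 market
  sellers, were below \<open>p0\<close>; then every t=1 market seller has type below \<open>\<theta>0 = p0 + S\<close>. Types
  below \<open>\<theta>0\<close> prefer the bailout to holding at both dates, and in a short-lived stimulation
  equilibrium almost nobody holds at t=1 to sell at t=2. So if the t=2 price \<open>qg\<close> for bailout
  takers were below \<open>p0\<close>, a buyer bidding \<open>p0\<close> to them would attract all types below \<open>\<theta>0\<close> except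
  the t=1 market sellers; as \<open>p0\<close> is the mean type below \<open>\<theta>0\<close> and the excluded sellers have the
  lower mean \<open>p1\<close>, that bid is profitable. If instead \<open>qg \<ge> p0\<close>, a market seller prefers the
  market to the bailout only if selling at the non-takers' t=2 price \<open>qn\<close> is worth more than
  \<open>\<theta>0\<close>; then every t=1 market seller also sells at t=2, so break-even in the non-takers' t=2
  market forces \<open>qn = p1 < p0\<close>.
\<close>

lemma fd_outside: "\<theta> \<notin> {0..1} \<Longrightarrow> fd f \<theta> = 0"
  by (simp add: fd_def)

lemma fd_nonneg: "\<forall>\<theta>\<in>{0..1}. 0 \<le> f \<theta> \<Longrightarrow> 0 \<le> fd f \<theta>"
  by (simp add: fd_def indicator_def)

lemma integrable_fd: "set_integrable lborel {0..1} f \<Longrightarrow> integrable lborel (fd f)"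
  unfolding fd_def set_integrable_def by simp

lemma integrable_bounded_mult_fd:
  assumes f_int: "set_integrable lborel {0..1} f"
    and h_meas: "h \<in> borel_measurable borel" and h_bounded: "\<forall>\<theta>\<in>{0..1}. \<bar>h \<theta>\<bar> \<le> C"
  shows "integrable lborel (\<lambda>\<theta>. h \<theta> * fd f \<theta>)"
proof (rule Bochner_Integration.integrable_bound)
  show "integrable lborel (\<lambda>\<theta>. C * fd f \<theta>)"
    using integrable_fd[OF f_int] by simp
  show "(\<lambda>\<theta>. h \<theta> * fd f \<theta>) \<in> borel_measurable lborel"
    using h_meas borel_measurable_integrable[OF integrable_fd[OF f_int]] by simp
  have "norm (h \<theta> * fd f \<theta>) \<le> norm (C * fd f \<theta>)" for \<theta>
  proof (cases "\<theta> \<in> {0..1}")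
    case True
    then have "\<bar>h \<theta>\<bar> \<le> \<bar>C\<bar>" using h_bounded by force
    then show ?thesis by (simp add: abs_mult mult_right_mono)
  qed (simp add: fd_outside)
  then show "AE \<theta> in lborel. norm (h \<theta> * fd f \<theta>) \<le> norm (C * fd f \<theta>)"
    by simp
qed

lemma mass_cong: "\<forall>\<theta>\<in>{0..1}. w \<theta> = w' \<theta> \<Longrightarrow> mass f w = mass f w'"
  unfolding mass_def by (rule Bochner_Integration.integral_cong) (auto simp: fd_outside)

lemma avg_cong:
  assumes "\<forall>\<theta>\<in>{0..1}. w \<theta> = w' \<theta>" shows "avg f w = avg f w'"
proof -
  have "(\<integral>\<theta>. \<theta> * w \<theta> * fd f \<theta> \<partial>lborel) = (\<integral>\<theta>. \<theta> * w' \<theta> * fd f \<theta> \<partial>lborel)"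
    by (rule Bochner_Integration.integral_cong) (use assms in \<open>auto simp: fd_outside\<close>)
  then show ?thesis
    using mass_cong[OF assms] by (simp add: avg_def)
qed

lemma mass_nonzero_imp_support:
  assumes "mass f w \<noteq> 0" obtains \<theta> where "\<theta> \<in> {0..1}" "w \<theta> \<noteq> 0"
proof -
  have "mass f (\<lambda>_. 0) = 0" by (simp add: mass_def)
  then show ?thesis
    using assms mass_cong[of w "\<lambda>_. 0" f] that by fastforce
qed

lemma AE_weight_fd_eq_0:
  assumes f_nonneg: "\<forall>\<theta>\<in>{0..1}. 0 \<le> f \<theta>" and f_int: "set_integrable lborel {0..1} f"
    and w_meas: "w \<in> borel_measurable borel" and w_bounded: "\<forall>\<theta>\<in>{0..1}. 0 \<le> w \<theta> \<and> w \<theta> \<le> C"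
    and null: "mass f w = 0"
  shows "AE \<theta> in lborel. w \<theta> * fd f \<theta> = 0"
proof -
  have "integrable lborel (\<lambda>\<theta>. w \<theta> * fd f \<theta>)"
    by (rule integrable_bounded_mult_fd[OF f_int w_meas, of C]) (use w_bounded in auto)
  moreover have "0 \<le> w \<theta> * fd f \<theta>" for \<theta>
    using w_bounded fd_nonneg[OF f_nonneg, of \<theta>] by (cases "\<theta> \<in> {0..1}") (auto simp: fd_outside)
  ultimately show ?thesis
    using null integral_nonneg_eq_0_iff_AE unfolding mass_def by blast
qed

lemma integral_add_null_weight:
  assumes f_int: "set_integrable lborel {0..1} f"
    and meas: "g \<in> borel_measurable borel" "w \<in> borel_measurable borel" "h \<in> borel_measurable borel"
    and null: "AE \<theta> in lborel. h \<theta> * fd f \<theta> = 0"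
  shows "(\<integral>\<theta>. g \<theta> * (w \<theta> + h \<theta>) * fd f \<theta> \<partial>lborel) = (\<integral>\<theta>. g \<theta> * w \<theta> * fd f \<theta> \<partial>lborel)"
proof (rule integral_cong_AE)
  have "fd f \<in> borel_measurable borel"
    using borel_measurable_integrable[OF integrable_fd[OF f_int]] by simp
  then show "(\<lambda>\<theta>. g \<theta> * (w \<theta> + h \<theta>) * fd f \<theta>) \<in> borel_measurable lborel"
    and "(\<lambda>\<theta>. g \<theta> * w \<theta> * fd f \<theta>) \<in> borel_measurable lborel"
    using meas by simp_all
  show "AE \<theta> in lborel. g \<theta> * (w \<theta> + h \<theta>) * fd f \<theta> = g \<theta> * w \<theta> * fd f \<theta>"
    using null by eventually_elim (simp add: algebra_simps)
qed

lemma avg_add_null_weight: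
  assumes "set_integrable lborel {0..1} f"
    and "w \<in> borel_measurable borel" "h \<in> borel_measurable borel"
    and "AE \<theta> in lborel. h \<theta> * fd f \<theta> = 0"
  shows "mass f (\<lambda>\<theta>. w \<theta> + h \<theta>) = mass f w" and "avg f (\<lambda>\<theta>. w \<theta> + h \<theta>) = avg f w"
  using integral_add_null_weight[OF assms(1) _ assms(2-4), of "\<lambda>_. 1"]
    integral_add_null_weight[OF assms(1) _ assms(2-4), of "\<lambda>\<theta>. \<theta>"]
  by (simp_all add: mass_def avg_def)

lemma integrable_deviation_fd:
  assumes f_int: "set_integrable lborel {0..1} f"
    and w_meas: "w \<in> borel_measurable borel" and w_bounded: "\<forall>\<theta>\<in>{0..1}. \<bar>w \<theta>\<bar> \<le> C"
  shows "integrable lborel (\<lambda>\<theta>. (\<theta> - c) * w \<theta> * fd f \<theta>)"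
proof (rule integrable_bounded_mult_fd[OF f_int, of _ "(1 + \<bar>c\<bar>) * C"])
  show "(\<lambda>\<theta>. (\<theta> - c) * w \<theta>) \<in> borel_measurable borel"
    using w_meas by simp
  show "\<forall>\<theta>\<in>{0..1}. \<bar>(\<theta> - c) * w \<theta>\<bar> \<le> (1 + \<bar>c\<bar>) * C"
  proof
    fix \<theta> :: real assume "\<theta> \<in> {0..1}"
    then have "\<bar>\<theta> - c\<bar> \<le> 1 + \<bar>c\<bar>" "\<bar>w \<theta>\<bar> \<le> C"
      using w_bounded by auto
    then show "\<bar>(\<theta> - c) * w \<theta>\<bar> \<le> (1 + \<bar>c\<bar>) * C"
      unfolding abs_mult by (rule mult_mono) auto
  qed
qed

lemma integral_deviation_eq_avg:
  assumes f_nonneg: "\<forall>\<theta>\<in>{0..1}. 0 \<le> f \<theta>" and f_int: "set_integrable lborel {0..1} f"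
    and w_meas: "w \<in> borel_measurable borel" and w_bounded: "\<forall>\<theta>\<in>{0..1}. 0 \<le> w \<theta> \<and> w \<theta> \<le> C"
  shows "(\<integral>\<theta>. (\<theta> - c) * w \<theta> * fd f \<theta> \<partial>lborel) = (avg f w - c) * mass f w"
proof -
  have int_w: "integrable lborel (\<lambda>\<theta>. w \<theta> * fd f \<theta>)"
    by (rule integrable_bounded_mult_fd[OF f_int w_meas, of C]) (use w_bounded in auto)
  have int_\<theta>w: "integrable lborel (\<lambda>\<theta>. \<theta> * w \<theta> * fd f \<theta>)"
    using integrable_deviation_fd[OF f_int w_meas, of C 0] w_bounded by simp
  define T where "T = (\<integral>\<theta>. \<theta> * w \<theta> * fd f \<theta> \<partial>lborel)"
  have "(\<integral>\<theta>. (\<theta> - c) * w \<theta> * fd f \<theta> \<partial>lborel)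
      = (\<integral>\<theta>. \<theta> * w \<theta> * fd f \<theta> - c * (w \<theta> * fd f \<theta>) \<partial>lborel)"
    by (simp add: algebra_simps)
  also have "\<dots> = T - c * mass f w"
    using int_w int_\<theta>w unfolding T_def mass_def by simp
  finally have "(\<integral>\<theta>. (\<theta> - c) * w \<theta> * fd f \<theta> \<partial>lborel) = T - c * mass f w" .
  moreover have "T = avg f w * mass f w"
  proof (cases "mass f w = 0")
    case True
    then have "AE \<theta> in lborel. w \<theta> * fd f \<theta> = 0"
      by (rule AE_weight_fd_eq_0[OF f_nonneg f_int w_meas w_bounded])
    then have "T = 0"
      unfolding T_def by (intro integral_eq_zero_AE) (auto elim: eventually_mono)
    then show ?thesis using True by simp
  qed (simp add: avg_def T_def)
  ultimately show ?thesis by (simp add: algebra_simps)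
qed

lemma sell_val_le: "0 \<le> S \<Longrightarrow> sell_val I S p \<le> p + S"
  by (simp add: sell_val_def)

lemma sell_val_funded: "I \<le> p \<Longrightarrow> sell_val I S p = p + S"
  by (simp add: sell_val_def)

locale short_lived_stimulation_eq =
  fixes f :: "real \<Rightarrow> real" and I S pg p1 qg qn :: real
    and \<sigma> :: "real \<Rightarrow> act1 \<Rightarrow> bool \<Rightarrow> real"
  assumes f_nonneg: "\<forall>\<theta>\<in>{0..1}. 0 \<le> f \<theta>"
    and f_int: "set_integrable lborel {0..1} f"
    and S_nonneg: "0 \<le> S"
    and stimulation: "short_lived_stimulation f I S pg \<sigma> p1 qg qn"
    and mkt_pos: "mass f (w_mkt1 \<sigma>) > 0"
begin

lemma valid: "valid_strategy \<sigma>"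
  and optimal: "firm_optimal I S pg p1 qg qn \<sigma>"
  and break_even_p1: "break_even f p1 (w_mkt1 \<sigma>)"
  and break_even_qn: "break_even f qn (w_sell2_n \<sigma>)"
  and no_overbid_qg: "no_overbid2 f I S qg (w_lab_g \<sigma>)"
  and hold_sell_null: "mass f (\<lambda>\<theta>. \<sigma> \<theta> Hold True) = 0"
  using stimulation unfolding short_lived_stimulation_def equilibrium_def by auto

lemma sigma_nonneg: "0 \<le> \<sigma> \<theta> a s"
  and sigma_measurable: "(\<lambda>\<theta>. \<sigma> \<theta> a s) \<in> borel_measurable borel"
  using valid unfolding valid_strategy_def by auto

lemma sigma_sum: "\<sigma> \<theta> Gov True + \<sigma> \<theta> Gov False + \<sigma> \<theta> Mkt True + \<sigma> \<theta> Mkt False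
    + \<sigma> \<theta> Hold True + \<sigma> \<theta> Hold False = 1"
  using valid unfolding valid_strategy_def by auto

lemma sigma_le_1: "\<sigma> \<theta> a s \<le> 1"
  using sigma_sum[of \<theta>] sigma_nonneg[of \<theta>] by (cases a; cases s) (smt (verit))+

lemma payoff_le_if_played:
  "\<theta> \<in> {0..1} \<Longrightarrow> 0 < \<sigma> \<theta> a s \<Longrightarrow>
    payoff I S pg p1 qg qn \<theta> a' s' \<le> payoff I S pg p1 qg qn \<theta> a s"
  using optimal unfolding firm_optimal_def by (elim ballE allE impE) auto

lemma p1_eq_avg: "p1 = avg f (w_mkt1 \<sigma>)"
  using break_even_p1 mkt_pos unfolding break_even_def by blast

lemma w_mkt1_measurable: "w_mkt1 \<sigma> \<in> borel_measurable borel"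
  unfolding w_mkt1_def using sigma_measurable by simp

lemma w_mkt1_bounded: "0 \<le> w_mkt1 \<sigma> \<theta> \<and> w_mkt1 \<sigma> \<theta> \<le> 2"
  using sigma_nonneg[of \<theta>] sigma_le_1[of \<theta>] unfolding w_mkt1_def by (smt (verit))

lemma AE_hold_sell_null: "AE \<theta> in lborel. \<sigma> \<theta> Hold True * fd f \<theta> = 0"
  by (rule AE_weight_fd_eq_0[OF f_nonneg f_int sigma_measurable _ hold_sell_null, of 1])
     (simp add: sigma_nonneg sigma_le_1)

lemma market_seller_type_le:
  assumes "\<theta> \<in> {0..1}" "0 < \<sigma> \<theta> Mkt s" shows "\<theta> \<le> sell_val I S p1"
  using payoff_le_if_played[OF assms, of Hold s] by (cases s) (auto simp: payoff_def)

lemma holder_type_ge: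
  assumes "\<theta> \<in> {0..1}" "0 < \<sigma> \<theta> Hold False" shows "sell_val I S pg \<le> \<theta>"
  using payoff_le_if_played[OF assms, of Gov False] by (simp add: payoff_def)

lemma w_lab_g_below_cutoff:
  assumes p1_low: "sell_val I S p1 < c" and pg_high: "c < sell_val I S pg" and "\<theta> \<in> {0..1}"
  shows "w_lab_g \<sigma> \<theta> * indicator {..c} \<theta>
    = (indicator {..c} \<theta> - w_mkt1 \<sigma> \<theta>) + - (indicator {..c} \<theta> * \<sigma> \<theta> Hold True)"
proof (cases "\<theta> \<le> c")
  case True
  have "\<sigma> \<theta> Hold False = 0"
    using holder_type_ge[OF \<open>\<theta> \<in> {0..1}\<close>] sigma_nonneg[of \<theta> Hold False] True pg_high
    by (smt (verit))
  then show ?thesis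
    using True sigma_sum[of \<theta>] unfolding w_lab_g_def w_mkt1_def by simp
next
  case False
  have "\<sigma> \<theta> Mkt s = 0" for s
    using market_seller_type_le[OF \<open>\<theta> \<in> {0..1}\<close>] sigma_nonneg[of \<theta> Mkt s] False p1_low
    by (smt (verit))
  then show ?thesis
    using False unfolding w_mkt1_def by simp
qed

lemma bailout_overbid_profit:
  assumes cutoffs: "sell_val I S p1 < c" "c < sell_val I S pg"
  shows "(\<integral>\<theta>. w_lab_g \<sigma> \<theta> * indicator {..c} \<theta> * (\<theta> - p) * fd f \<theta> \<partial>lborel)
    = (condexp f {..c} - p) * mass f (indicator {..c}) + (p - p1) * mass f (w_mkt1 \<sigma>)"
proof -
  define ind where "ind = (indicator {..c} :: real \<Rightarrow> real)"
  have ind_meas: "ind \<in> borel_measurable borel"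
    by (simp add: ind_def)
  have ind_bounded: "\<forall>\<theta>\<in>{0..1}. 0 \<le> ind \<theta> \<and> ind \<theta> \<le> 1"
    by (simp add: ind_def indicator_def)
  have pointwise: "w_lab_g \<sigma> \<theta> * ind \<theta> * (\<theta> - p) * fd f \<theta>
      = (\<theta> - p) * ((ind \<theta> - w_mkt1 \<sigma> \<theta>) + - (ind \<theta> * \<sigma> \<theta> Hold True)) * fd f \<theta>" for \<theta>
  proof (cases "\<theta> \<in> {0..1}")
    case True
    have "w_lab_g \<sigma> \<theta> * ind \<theta> * (\<theta> - p) * fd f \<theta> = (\<theta> - p) * (w_lab_g \<sigma> \<theta> * ind \<theta>) * fd f \<theta>"
      by (simp add: ac_simps)
    then show ?thesis
      using w_lab_g_below_cutoff[OF cutoffs True] by (simp add: ind_def)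
  qed (simp add: fd_outside)
  have "(\<integral>\<theta>. w_lab_g \<sigma> \<theta> * ind \<theta> * (\<theta> - p) * fd f \<theta> \<partial>lborel)
      = (\<integral>\<theta>. (\<theta> - p) * ((ind \<theta> - w_mkt1 \<sigma> \<theta>) + - (ind \<theta> * \<sigma> \<theta> Hold True)) * fd f \<theta> \<partial>lborel)"
    by (simp only: pointwise)
  also have "\<dots> = (\<integral>\<theta>. (\<theta> - p) * (ind \<theta> - w_mkt1 \<sigma> \<theta>) * fd f \<theta> \<partial>lborel)"
  proof (rule integral_add_null_weight[OF f_int])
    show "(\<lambda>\<theta>. \<theta> - p) \<in> borel_measurable borel"
      and "(\<lambda>\<theta>. ind \<theta> - w_mkt1 \<sigma> \<theta>) \<in> borel_measurable borel"
      and "(\<lambda>\<theta>. - (ind \<theta> * \<sigma> \<theta> Hold True)) \<in> borel_measurable borel"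
      using ind_meas w_mkt1_measurable sigma_measurable by simp_all
    show "AE \<theta> in lborel. - (ind \<theta> * \<sigma> \<theta> Hold True) * fd f \<theta> = 0"
      using AE_hold_sell_null by eventually_elim simp
  qed
  also have "\<dots> = (\<integral>\<theta>. (\<theta> - p) * ind \<theta> * fd f \<theta> - (\<theta> - p) * w_mkt1 \<sigma> \<theta> * fd f \<theta> \<partial>lborel)"
    by (simp add: algebra_simps)
  also have "\<dots> = (\<integral>\<theta>. (\<theta> - p) * ind \<theta> * fd f \<theta> \<partial>lborel)
      - (\<integral>\<theta>. (\<theta> - p) * w_mkt1 \<sigma> \<theta> * fd f \<theta> \<partial>lborel)"
  proof (rule Bochner_Integration.integral_diff)
    show "integrable lborel (\<lambda>\<theta>. (\<theta> - p) * ind \<theta> * fd f \<theta>)"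
      by (rule integrable_deviation_fd[OF f_int ind_meas, of 1]) (use ind_bounded in auto)
    show "integrable lborel (\<lambda>\<theta>. (\<theta> - p) * w_mkt1 \<sigma> \<theta> * fd f \<theta>)"
      by (rule integrable_deviation_fd[OF f_int w_mkt1_measurable, of 2]) (use w_mkt1_bounded in auto)
  qed
  also have "\<dots> = (condexp f {..c} - p) * mass f ind + (p - p1) * mass f (w_mkt1 \<sigma>)"
  proof -
    have "(\<integral>\<theta>. (\<theta> - p) * ind \<theta> * fd f \<theta> \<partial>lborel) = (condexp f {..c} - p) * mass f ind"
      using integral_deviation_eq_avg[OF f_nonneg f_int ind_meas ind_bounded, of p]
      by (simp add: condexp_def ind_def)
    moreover have "(\<integral>\<theta>. (\<theta> - p) * w_mkt1 \<sigma> \<theta> * fd f \<theta> \<partial>lborel) = (p1 - p) * mass f (w_mkt1 \<sigma>)"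
      using integral_deviation_eq_avg[OF f_nonneg f_int w_mkt1_measurable, of 2 p] w_mkt1_bounded
      by (simp add: p1_eq_avg)
    ultimately show ?thesis
      by (simp add: algebra_simps)
  qed
  finally show ?thesis
    by (simp add: ind_def)
qed

lemma bailout_price_ge:
  assumes "I \<le> p0" "p0 < pg" "p1 < p0" and p0_eq: "p0 = condexp f {..p0 + S}"
  shows "p0 \<le> qg"
proof (rule ccontr)
  assume "\<not> p0 \<le> qg"
  have "sell_val I S p1 < p0 + S" "p0 + S < sell_val I S pg"
    using sell_val_le[OF S_nonneg, of I p1] sell_val_funded[of I pg S] assms by auto
  from bailout_overbid_profit[OF this, of p0]
  have "(\<integral>\<theta>. w_lab_g \<sigma> \<theta> * indicator {..p0 + S} \<theta> * (\<theta> - p0) * fd f \<theta> \<partial>lborel)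
      = (p0 - p1) * mass f (w_mkt1 \<sigma>)"
    using p0_eq by simp
  also have "\<dots> > 0"
    using \<open>p1 < p0\<close> mkt_pos by simp
  moreover have "(\<integral>\<theta>. w_lab_g \<sigma> \<theta> * indicator {\<theta>. \<theta> \<le> sell_val I S p0} \<theta> * (\<theta> - p0) * fd f \<theta> \<partial>lborel) \<le> 0"
    using no_overbid_qg \<open>\<not> p0 \<le> qg\<close> unfolding no_overbid2_def by auto
  ultimately show False
    by (simp add: sell_val_funded[OF \<open>I \<le> p0\<close>] atMost_def)
qed

lemma non_taker_price_high:
  assumes "I \<le> p0" "p0 < pg" "p0 \<le> qg" and p1_low: "sell_val I S p1 < p0 + S"
  shows "p0 + S < sell_val I S qn"
proof -
  obtain \<theta> s where \<theta>: "\<theta> \<in> {0..1}" "0 < \<sigma> \<theta> Mkt s"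
  proof -
    have "mass f (w_mkt1 \<sigma>) \<noteq> 0"
      using mkt_pos by simp
    then obtain \<theta> where "\<theta> \<in> {0..1}" "w_mkt1 \<sigma> \<theta> \<noteq> 0"
      by (rule mass_nonzero_imp_support)
    then show ?thesis
      using that sigma_nonneg[of \<theta> Mkt] unfolding w_mkt1_def by (smt (verit))
  qed
  have "sell_val I S pg + sell_val I S qg \<le> sell_val I S p1 + (if s then sell_val I S qn else \<theta>)"
    using payoff_le_if_played[OF \<theta>, of Gov True] unfolding payoff_def by (cases s) auto
  moreover have "sell_val I S pg = pg + S" "sell_val I S qg = qg + S"
    using assms by (simp_all add: sell_val_funded)
  ultimately show ?thesis
    using market_seller_type_le[OF \<theta>] p1_low assms by (cases s) auto
qed

lemma market_price_ge:
  assumes "I \<le> p0" "p0 < pg" "p0 \<le> qg"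
  shows "p0 \<le> p1"
proof (rule ccontr)
  assume "\<not> p0 \<le> p1"
  then have p1_low: "sell_val I S p1 < p0 + S"
    using sell_val_le[OF S_nonneg, of I p1] by simp
  note qn_high = non_taker_price_high[OF assms p1_low]
  have no_mkt_hold: "\<sigma> \<theta> Mkt False = 0" if "\<theta> \<in> {0..1}" for \<theta>
  proof (rule ccontr)
    assume "\<sigma> \<theta> Mkt False \<noteq> 0"
    then have played: "0 < \<sigma> \<theta> Mkt False"
      using sigma_nonneg[of \<theta> Mkt False] by simp
    have "sell_val I S qn \<le> \<theta>"
      using payoff_le_if_played[OF that played, of Mkt True] by (simp add: payoff_def)
    then show False
      using market_seller_type_le[OF that played] p1_low qn_high by simp
  qed
  then have sell2_n: "\<forall>\<theta>\<in>{0..1}. w_sell2_n \<sigma> \<theta> = w_mkt1 \<sigma> \<theta> + \<sigma> \<theta> Hold True"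
    unfolding w_sell2_n_def w_mkt1_def by simp
  note null_hold = avg_add_null_weight[OF f_int w_mkt1_measurable sigma_measurable AE_hold_sell_null]
  have "mass f (w_sell2_n \<sigma>) > 0"
    using mass_cong[OF sell2_n] null_hold(1) mkt_pos by simp
  then have "qn = avg f (w_sell2_n \<sigma>)"
    using break_even_qn unfolding break_even_def by blast
  also have "\<dots> = p1"
    using avg_cong[OF sell2_n] null_hold(2) p1_eq_avg by simp
  finally show False
    using p1_low qn_high by simp
qed

end

theorem lemmaB2:
  fixes f :: "real \<Rightarrow> real" and I S pg \<theta>0 p0 p1 qg qn :: real
    and \<sigma> :: "real \<Rightarrow> act1 \<Rightarrow> bool \<Rightarrow> real"
  assumes I_pos: "I > 0" and S_pos: "S > 0"
    and f_pos: "\<forall>\<theta>\<in>{0..1}. f \<theta> > 0"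
    and f_int: "set_integrable lborel {0..1} f"
    and f_norm: "(LINT \<theta>:{0..1}|lborel. f \<theta>) = 1"
    and f_lc: "strictly_log_concave_on {0..1} f"
    and mono_cond: "\<forall>b\<in>{0<..1}. strict_mono_on {0<..<b}
          (\<lambda>a. 2 * condexp f {a<..<b} - condexp f {..a})"
    and theta0: "\<theta>0 \<in> {0<..<1}" "\<theta>0 - S = condexp f {..\<theta>0}"
    and theta0_unique: "\<forall>x\<in>{0<..<1}. x - S = condexp f {..x} \<longrightarrow> x = \<theta>0"
    and p0_def: "p0 = condexp f {..\<theta>0}"
    and p0_I: "p0 \<ge> I"
    and pg_range: "p0 < pg" "pg < 1 - S"
    and eq: "short_lived_stimulation f I S pg \<sigma> p1 qg qn"
    and mkt_pos: "mass f (w_mkt1 \<sigma>) > 0"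
  shows "theta_m_bar f \<sigma> \<ge> p0"
proof -
  interpret short_lived_stimulation_eq f I S pg p1 qg qn \<sigma>
    using f_pos f_int S_pos eq mkt_pos by unfold_locales (auto simp: less_imp_le)
  have "p0 + S = \<theta>0"
    using theta0(2) p0_def by linarith
  then have p0_eq: "p0 = condexp f {..p0 + S}"
    using p0_def by (simp only:)
  have "p0 \<le> p1"
  proof (rule ccontr)
    assume "\<not> p0 \<le> p1"
    then have "p0 \<le> qg"
      using bailout_price_ge[OF p0_I pg_range(1) _ p0_eq] by simp
    then show False
      using market_price_ge[OF p0_I pg_range(1)] \<open>\<not> p0 \<le> p1\<close> by simp
  qed
  then show ?thesis
    by (simp add: theta_m_bar_def p1_eq_avg)
qed

end
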